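(* Let $\mu_1,\mu_2\in M_+(\mathbb T)$. For every $f\in\mathcal D(\mu_1,\mu_2)$, the functions $(z_1,z_2)\mapsto f(z_1,0)$ and $(z_1,z_2)\mapsto f(0,z_2)$ belong to $\mathcal D(\mu_1,\mu_2)$. Moreover, the maps $f\mapsto f(\cdot,0)$ and $f\mapsto f(0,\cdot)$ from $\mathcal D(\mu_1,\mu_2)$ into itself are contractive (linear) homomorphisms.
   Context: $\mathbb D$ is the open unit disc, $\mathbb T$ the unit circle, $\mathcal O(\mathbb D^2)$ the holomorphic functions on $\mathbb D^2$, $M_+(\mathbb T)$ the finite positive Borel measures on $\mathbb T$. Integrals $\int_{\mathbb T}\cdots d\theta$ are over $\theta\in[0,2\pi]$ with respect to $d\theta/2\pi$; $dA$ is normalized area measure on $\mathbb D$; $P_\mu(w)=\int_{\mathbb T}\frac{1-|w|^2}{|w-\zeta|^2}d\mu(\zeta)$. $H^2(\mathbb D^2)$ is the space of $f=\sum a_{m,n}z_1^mz_2^n\in\mathcal O(\mathbb D^2)$ with $\|f\|^2_{H^2}=\sum|a_{m,n}|^2<\infty$. For $f\in\mathcal O(\mathbb D^2)$, $D_{\mu_1,\mu_2}(f)=\sup_{0<r<1}\int_{\mathbb T}\int_{\mathbb D}|\partial_1f(z_1,re^{i\theta})|^2P_{\mu_1}(z_1)dA(z_1)d\theta+\sup_{0<r<1}\int_{\mathbb T}\int_{\mathbb D}|\partial_2f(re^{i\theta},z_2)|^2P_{\mu_2}(z_2)dA(z_2)d\theta$. If $\mu_1=0$ or $\mu_2=0$,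 $\mathcal D(\mu_1,\mu_2)=\{f\in H^2(\mathbb D^2):D_{\mu_1,\mu_2}(f)<\infty\}$, otherwise $\mathcal D(\mu_1,\mu_2)=\{f\in\mathcal O(\mathbb D^2):D_{\mu_1,\mu_2}(f)<\infty\}$; it is a Hilbert space (contained in $H^2(\mathbb D^2)$) with norm $\|f\|^2=\|f\|^2_{H^2}+D_{\mu_1,\mu_2}(f)$. *)

theory Defs
  imports "HOL-Analysis.Analysis"
begin

text \<open>Functions on the bidisc are modelled as functions complex * complex to complex;
  only their values on the bidisc matter.\<close>

text \<open>Holomorphic functions on the bidisc: continuous and holomorphic in each variable
  separately (Osgood's definition).\<close>
definition holo2 :: "(complex \<times> complex \<Rightarrow> complex) \<Rightarrow> bool" where
  "holo2 f \<longleftrightarrow> continuous_on (ball 0 1 \<times> ball 0 1) f \<and>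
     (\<forall>w\<in>ball 0 1. (\<lambda>z. f (z, w)) holomorphic_on ball 0 1) \<and>
     (\<forall>z\<in>ball 0 1. (\<lambda>w. f (z, w)) holomorphic_on ball 0 1)"

definition coeff2 :: "(complex \<times> complex \<Rightarrow> complex) \<Rightarrow> nat \<Rightarrow> nat \<Rightarrow> complex" where
  "coeff2 f m n = ((deriv ^^ m) (\<lambda>z1. (deriv ^^ n) (\<lambda>z2. f (z1, z2)) 0) 0)
                   / (of_nat (fact m) * of_nat (fact n))"

definition H2norm2 :: "(complex \<times> complex \<Rightarrow> complex) \<Rightarrow> ennreal" where
  "H2norm2 f = infsum (\<lambda>(m, n). ennreal ((cmod (coeff2 f m n))\<^sup>2)) UNIV"

definition inH2 :: "(complex \<times> complex \<Rightarrow> complex) \<Rightarrow> bool" where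
  "inH2 f \<longleftrightarrow> holo2 f \<and> H2norm2 f < \<infinity>"

text \<open>Finite positive Borel measures on the unit circle (as Borel measures on the plane
  concentrated on the circle).\<close>
definition Mplus_T :: "complex measure \<Rightarrow> bool" where
  "Mplus_T \<mu> \<longleftrightarrow> sets \<mu> = sets (borel :: complex measure) \<and> finite_measure \<mu> \<and>
                   emeasure \<mu> (- sphere 0 1) = 0"

definition zero_meas :: "complex measure \<Rightarrow> bool" where
  "zero_meas \<mu> \<longleftrightarrow> emeasure \<mu> (space \<mu>) = 0"

definition Poisson :: "complex measure \<Rightarrow> complex \<Rightarrow> ennreal" where
  "Poisson \<mu> w = (\<integral>\<^sup>+ \<zeta>. ennreal ((1 - (cmod w)\<^sup>2) / (cmod (w - \<zeta>))\<^sup>2) \<partial>\<mu>)"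

text \<open>Normalised area measure dA = dx dy / pi on the disc; d\<theta>/2pi on [0,2pi].\<close>
definition Dint1 :: "complex measure \<Rightarrow> (complex \<times> complex \<Rightarrow> complex) \<Rightarrow> real \<Rightarrow> ennreal" where
  "Dint1 \<mu> f r = ennreal (1 / (2 * pi)) *
     (\<integral>\<^sup>+ \<theta>. indicator {0..2*pi} \<theta> * (ennreal (1 / pi) *
        (\<integral>\<^sup>+ z. indicator (ball 0 1) z *
            ennreal ((cmod (deriv (\<lambda>u. f (u, r * cis \<theta>)) z))\<^sup>2) * Poisson \<mu> z \<partial>lborel)) \<partial>lborel)"

definition Dint2 :: "complex measure \<Rightarrow> (complex \<times> complex \<Rightarrow> complex) \<Rightarrow> real \<Rightarrow> ennreal" where
  "Dint2 \<mu> f r = ennreal (1 / (2 * pi)) *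
     (\<integral>\<^sup>+ \<theta>. indicator {0..2*pi} \<theta> * (ennreal (1 / pi) *
        (\<integral>\<^sup>+ z. indicator (ball 0 1) z *
            ennreal ((cmod (deriv (\<lambda>u. f (r * cis \<theta>, u)) z))\<^sup>2) * Poisson \<mu> z \<partial>lborel)) \<partial>lborel)"

definition Dmu :: "complex measure \<Rightarrow> complex measure \<Rightarrow> (complex \<times> complex \<Rightarrow> complex) \<Rightarrow> ennreal" where
  "Dmu \<mu>1 \<mu>2 f = (SUP r\<in>{0<..<1}. Dint1 \<mu>1 f r) + (SUP r\<in>{0<..<1}. Dint2 \<mu>2 f r)"

definition Dspace :: "complex measure \<Rightarrow> complex measure \<Rightarrow> (complex \<times> complex \<Rightarrow> complex) set" where
  "Dspace \<mu>1 \<mu>2 = {f. (if zero_meas \<mu>1 \<or> zero_meas \<mu>2 then inH2 f else holo2 f) \<and> Dmu \<mu>1 \<mu>2 f < \<infinity>}"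

definition Dnorm2 :: "complex measure \<Rightarrow> complex measure \<Rightarrow> (complex \<times> complex \<Rightarrow> complex) \<Rightarrow> ennreal" where
  "Dnorm2 \<mu>1 \<mu>2 f = H2norm2 f + Dmu \<mu>1 \<mu>2 f"

definition restr1 :: "(complex \<times> complex \<Rightarrow> complex) \<Rightarrow> complex \<times> complex \<Rightarrow> complex" where
  "restr1 f = (\<lambda>(z1, z2). f (z1, 0))"

definition restr2 :: "(complex \<times> complex \<Rightarrow> complex) \<Rightarrow> complex \<times> complex \<Rightarrow> complex" where
  "restr2 f = (\<lambda>(z1, z2). f (0, z2))"

end

theory Submission
  imports Defs "HOL-Complex_Analysis.Complex_Analysis"
begin

text \<open>Restricting to \<open>z\<^sub>2 = 0\<close> keeps only the Taylor coefficients \<open>a\<^sub>m\<^sub>,\<^sub>0\<close>, so the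
  \<open>H\<^sup>2\<close> part of the norm can only decrease, and it kills the term with \<open>\<partial>\<^sub>2\<close>. For the term
  with \<open>\<partial>\<^sub>1\<close> fix \<open>z\<^sub>1\<close>: the function \<open>w \<mapsto> \<partial>\<^sub>1f(z\<^sub>1, w)\<close> is holomorphic, so by
  subharmonicity \<open>|\<partial>\<^sub>1f(z\<^sub>1, 0)|\<^sup>2\<close> is at most the mean of \<open>|\<partial>\<^sub>1f(z\<^sub>1, w)|\<^sup>2\<close> over each
  circle \<open>|w| = r\<close>. Integrating against \<open>P\<^sub>\<mu>\<^sub>1 dA\<close> and exchanging the order of integration
  bounds the term of \<open>f(\<cdot>, 0)\<close> by each of the integrals whose supremum is the corresponding
  term of \<open>f\<close>. That \<open>w \<mapsto> \<partial>\<^sub>1f(z\<^sub>1, w)\<close> is holomorphic, and \<open>\<partial>\<^sub>1f\<close> jointly continuous,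
  follows from the Cauchy formula for the derivative, an integral that depends holomorphically
  on the parameter \<open>w\<close> by Morera's theorem. Swapping the variables gives the case of
  \<open>f(0, \<cdot>)\<close>.\<close>

lemma coeff2_restr1: "coeff2 (restr1 f) m n = (if n = 0 then coeff2 f m 0 else 0)"
  by (simp add: coeff2_def restr1_def)

lemma coeff2_restr2: "coeff2 (restr2 f) m n = (if m = 0 then coeff2 f 0 n else 0)"
  by (simp add: coeff2_def restr2_def)

lemma H2norm2_restr1_le: "H2norm2 (restr1 f) \<le> H2norm2 f"
  unfolding H2norm2_def
  by (intro infsum_mono nonneg_summable_on_complete) (auto simp: coeff2_restr1)

lemma H2norm2_restr2_le: "H2norm2 (restr2 f) \<le> H2norm2 f"
  unfolding H2norm2_def
  by (intro infsum_mono nonneg_summable_on_complete) (auto simp: coeff2_restr2)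

lemma holo2_comp_swap:
  assumes "holo2 f"
  shows "holo2 (f \<circ> prod.swap)"
proof -
  have "continuous_on (ball 0 1 \<times> ball 0 1) (\<lambda>x. f (prod.swap x))"
    by (rule continuous_on_compose2[of "ball 0 1 \<times> ball 0 1" f])
       (use assms in \<open>auto simp: holo2_def intro: continuous_on_swap\<close>)
  with assms show ?thesis
    by (simp add: holo2_def o_def)
qed

lemma holo2_restr1:
  assumes "holo2 f"
  shows "holo2 (restr1 f)"
proof -
  have "continuous_on (ball 0 1 \<times> ball 0 1) (\<lambda>p. f (fst p, 0))"
    by (rule continuous_on_compose2[of "ball 0 1 \<times> ball 0 1" f])
       (use assms in \<open>auto simp: holo2_def intro!: continuous_intros\<close>)
  with assms show ?thesis
    by (simp add: holo2_def restr1_def case_prod_unfold)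
qed

lemma restr2_eq_swap: "restr2 f = restr1 (f \<circ> prod.swap) \<circ> prod.swap"
  by (simp add: restr2_def restr1_def fun_eq_iff)

lemma holo2_restr2: "holo2 f \<Longrightarrow> holo2 (restr2 f)"
  by (simp add: restr2_eq_swap holo2_comp_swap holo2_restr1)

lemma Dint2_eq_Dint1_swap: "Dint2 \<mu> f r = Dint1 \<mu> (f \<circ> prod.swap) r"
  by (simp add: Dint1_def Dint2_def)

lemma Dint2_restr1: "Dint2 \<mu> (restr1 f) r = 0"
  by (simp add: Dint2_def restr1_def)

lemma Dint1_restr2: "Dint1 \<mu> (restr2 f) r = 0"
  by (simp add: Dint1_def restr2_def)

lemma circle_mean_value:
  fixes g :: "complex \<Rightarrow> complex"
  assumes "g holomorphic_on cball c r" and "0 < r"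
  shows "((\<lambda>t. g (c + r * cis t)) has_integral 2 * of_real pi * g c) {0..2*pi}"
proof -
  have "((\<lambda>u. g u / (u - c)) has_contour_integral 2 * of_real pi * \<i> * g c) (circlepath c r)"
    using assms by (intro Cauchy_integral_circlepath_simple) auto
  then have "((\<lambda>t. g (c + r * cis t) / (c + r * cis t - c) * r * \<i> * cis t)
               has_integral 2 * of_real pi * \<i> * g c) {0..2*pi}"
    unfolding circlepath_def by (subst (asm) has_contour_integral_part_circlepath_iff) auto
  also have "(\<lambda>t. g (c + r * cis t) / (c + r * cis t - c) * r * \<i> * cis t)
               = (\<lambda>t. \<i> * g (c + r * cis t))"
    using assms(2) by (auto simp: fun_eq_iff field_simps)
  finally have "((\<lambda>t. \<i> * g (c + r * cis t)) has_integral \<i> * (2 * of_real pi * g c)) {0..2*pi}"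
    by (simp only: ac_simps)
  then show ?thesis
    by (simp add: has_integral_mult_right_iff)
qed

lemma power2_norm_le_circle_mean:
  fixes h :: "complex \<Rightarrow> complex"
  assumes hol: "h holomorphic_on cball c r" and r: "0 < r"
  shows "ennreal (2 * pi * (cmod (h c))\<^sup>2)
           \<le> (\<integral>\<^sup>+ t. indicator {0..2*pi} t * ennreal ((cmod (h (c + r * cis t)))\<^sup>2) \<partial>lborel)"
proof -
  have mean: "((\<lambda>t. (h (c + r * cis t))\<^sup>2) has_integral 2 * of_real pi * (h c)\<^sup>2) {0..2*pi}"
    using hol r by (intro circle_mean_value holomorphic_intros)
  have "continuous_on {0..2*pi} (\<lambda>t. h (c + r * cis t))"
    by (rule continuous_on_compose2[OF holomorphic_on_imp_continuous_on[OF hol]])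
       (use r in \<open>auto intro!: continuous_intros simp: dist_norm norm_mult\<close>)
  then have int: "(\<lambda>t. (cmod (h (c + r * cis t)))\<^sup>2) integrable_on {0..2*pi}"
    by (intro integrable_continuous_real continuous_intros)
  then have "norm (integral {0..2*pi} (\<lambda>t. (h (c + r * cis t))\<^sup>2))
               \<le> integral {0..2*pi} (\<lambda>t. (cmod (h (c + r * cis t)))\<^sup>2)"
    by (intro integral_norm_bound_integral) (use mean in \<open>auto simp: norm_power\<close>)
  then have "ennreal (2 * pi * (cmod (h c))\<^sup>2)
               \<le> ennreal (integral {0..2*pi} (\<lambda>t. (cmod (h (c + r * cis t)))\<^sup>2))"
    by (intro ennreal_leI) (simp add: integral_unique[OF mean] norm_mult norm_power)
  also have "\<dots> = (\<integral>\<^sup>+ t. indicator {0..2*pi} t * ennreal ((cmod (h (c + r * cis t)))\<^sup>2) \<partial>lborel)"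
    using nn_integral_has_integral_lebesgue'[OF _ integrable_integral[OF int]]
    by (simp add: mult.commute)
  finally show ?thesis .
qed

lemma contour_integrable_continuous_C1:
  assumes "valid_path \<gamma>" "continuous_on {0..1} (\<lambda>t. vector_derivative \<gamma> (at t))"
      and "continuous_on (path_image \<gamma>) g"
  shows "g contour_integrable_on \<gamma>"
proof -
  have "continuous_on {0..1} \<gamma>"
    using valid_path_imp_path[OF assms(1)] by (simp add: path_def)
  then have "continuous_on {0..1} (\<lambda>t. g (\<gamma> t))"
    by (rule continuous_on_compose2[OF assms(3)]) (auto simp: path_image_def)
  with assms(2) show ?thesis
    by (simp add: contour_integrable_on integrable_continuous_real continuous_on_mult)
qed

lemma continuous_on_contour_integral_param:
  fixes F :: "'a::topological_space \<Rightarrow> complex \<Rightarrow> complex"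
  assumes \<gamma>: "valid_path \<gamma>" "continuous_on {0..1} (\<lambda>t. vector_derivative \<gamma> (at t))"
      and F: "continuous_on (S \<times> path_image \<gamma>) (\<lambda>(w, u). F w u)"
  shows "continuous_on S (\<lambda>w. contour_integral \<gamma> (F w))"
proof -
  have "continuous_on {0..1} \<gamma>"
    using valid_path_imp_path[OF \<gamma>(1)] by (simp add: path_def)
  then have "continuous_on (S \<times> {0..1}) (\<lambda>p. (fst p, \<gamma> (snd p)))"
    by (intro continuous_intros continuous_on_compose2[OF _ continuous_on_snd]) auto
  moreover have "(\<lambda>p. (fst p, \<gamma> (snd p))) ` (S \<times> {0..1}) \<subseteq> S \<times> path_image \<gamma>"
    by (auto simp: path_image_def)
  ultimately have "continuous_on (S \<times> {0..1}) (\<lambda>p. F (fst p) (\<gamma> (snd p)))"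
    using continuous_on_compose2[OF F] by force
  moreover have "continuous_on (S \<times> {0..1}) (\<lambda>p. vector_derivative \<gamma> (at (snd p)))"
    by (rule continuous_on_compose2[OF \<gamma>(2) continuous_on_snd]) auto
  ultimately have "continuous_on (S \<times> {0..1}) (\<lambda>(w, t). F w (\<gamma> t) * vector_derivative \<gamma> (at t))"
    by (simp add: case_prod_unfold continuous_on_mult)
  then show ?thesis
    using integral_continuous_on_param[of S 0 1 "\<lambda>w t. F w (\<gamma> t) * vector_derivative \<gamma> (at t)"]
    by (simp add: contour_integral_integral)
qed

lemma holomorphic_on_contour_integral_param:
  assumes S: "open S"
      and \<gamma>: "valid_path \<gamma>" "continuous_on {0..1} (\<lambda>t. vector_derivative \<gamma> (at t))"
      and F: "continuous_on (S \<times> path_image \<gamma>) (\<lambda>(w, u). F w u)"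
      and hol: "\<And>u. u \<in> path_image \<gamma> \<Longrightarrow> (\<lambda>w. F w u) holomorphic_on S"
  shows "(\<lambda>w. contour_integral \<gamma> (F w)) holomorphic_on S"
proof -
  let ?I = "\<lambda>w. contour_integral \<gamma> (F w)"
  let ?J = "\<lambda>a b u. contour_integral (linepath a b) (\<lambda>w. F w u)"
  have swap: "contour_integral (linepath a b) ?I = contour_integral \<gamma> (?J a b)"
    and J_integrable: "?J a b contour_integrable_on \<gamma>"
    if "closed_segment a b \<subseteq> S" for a b
  proof -
    have F_seg: "continuous_on (closed_segment a b \<times> path_image \<gamma>) (\<lambda>(w, u). F w u)"
      by (rule continuous_on_subset[OF F]) (use that in auto)
    then show "contour_integral (linepath a b) ?I = contour_integral \<gamma> (?J a b)"
      using \<gamma> by (intro contour_integral_swap) auto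
    have "continuous_on (path_image \<gamma> \<times> closed_segment a b) (\<lambda>(u, w). F w u)"
      using F_seg by (rule continuous_on_swap_args)
    then have "continuous_on (path_image \<gamma>) (?J a b)"
      by (intro continuous_on_contour_integral_param) auto
    then show "?J a b contour_integrable_on \<gamma>"
      by (rule contour_integrable_continuous_C1[OF \<gamma>])
  qed
  have "?I analytic_on S"
  proof (rule Morera_triangle[OF continuous_on_contour_integral_param[OF \<gamma> F] S], intro impI)
    fix a b c
    assume hull: "convex hull {a, b, c} \<subseteq> S"
    have seg: "closed_segment x y \<subseteq> S" if "x \<in> {a, b, c}" "y \<in> {a, b, c}" for x y
      using closed_segment_subset_convex_hull[OF hull_inc[OF that(1)] hull_inc[OF that(2)]] hull
      by blast
    then have segs: "closed_segment a b \<subseteq> S" "closed_segment b c \<subseteq> S" "closed_segment c a \<subseteq> S"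
      by simp_all
    have zero: "?J a b u + ?J b c u + ?J c a u = 0" if "u \<in> path_image \<gamma>" for u
    proof -
      have "(\<lambda>w. F w u) holomorphic_on convex hull {a, b, c}"
        using hol[OF that] hull by (rule holomorphic_on_subset)
      then show ?thesis
        by (intro has_chain_integral_chain_integral3 Cauchy_theorem_triangle)
    qed
    have "contour_integral (linepath a b) ?I + contour_integral (linepath b c) ?I
            + contour_integral (linepath c a) ?I
          = contour_integral \<gamma> (?J a b) + contour_integral \<gamma> (?J b c) + contour_integral \<gamma> (?J c a)"
      by (simp only: swap segs)
    also have "\<dots> = contour_integral \<gamma> (\<lambda>u. ?J a b u + ?J b c u + ?J c a u)"
      using J_integrable[OF segs(1)] J_integrable[OF segs(2)] J_integrable[OF segs(3)]
      by (simp only: contour_integral_add contour_integrable_add)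
    also have "\<dots> = 0"
      by (rule contour_integral_eq_0) (rule zero)
    finally show "contour_integral (linepath a b) ?I + contour_integral (linepath b c) ?I
                  + contour_integral (linepath c a) ?I = 0" .
  qed
  then show ?thesis
    by (rule analytic_imp_holomorphic)
qed

lemma continuous_on_vector_derivative_circlepath:
  "continuous_on A (\<lambda>t. vector_derivative (circlepath c r) (at t))"
  unfolding vector_derivative_circlepath by (intro continuous_intros)

lemma partial1_eq_Cauchy_integral:
  assumes f: "holo2 f" and \<rho>: "\<rho> < 1" and z: "z \<in> ball 0 \<rho>" and w: "w \<in> ball 0 1"
  shows "deriv (\<lambda>u. f (u, w)) z =
           1 / (2 * of_real pi * \<i>) *
           contour_integral (circlepath 0 \<rho>) (\<lambda>u. f (u, w) / (u - z)\<^sup>2)"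
proof -
  have "(\<lambda>u. f (u, w)) holomorphic_on ball 0 1"
    using f w by (simp add: holo2_def)
  moreover have "cball 0 \<rho> \<subseteq> ball (0::complex) 1"
    using \<rho> by auto
  ultimately have hol: "(\<lambda>u. f (u, w)) holomorphic_on cball 0 \<rho>"
    by (rule holomorphic_on_subset)
  show ?thesis
    by (intro DERIV_imp_deriv Cauchy_derivative_integral_circlepath(2) z
        holomorphic_on_imp_continuous_on hol holomorphic_on_subset[OF hol ball_subset_cball])
qed

lemma continuous_on_Cauchy_kernel:
  assumes f: "holo2 f" and \<rho>: "\<rho> < 1"
  shows "continuous_on ((ball 0 \<rho> \<times> ball 0 1) \<times> sphere 0 \<rho>) (\<lambda>(p, u). f (u, snd p) / (u - fst p)\<^sup>2)"
proof -
  have "continuous_on ((ball 0 \<rho> \<times> ball 0 1) \<times> sphere 0 \<rho>) (\<lambda>q. f (snd q, snd (fst q)))"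
    by (rule continuous_on_compose2[of "ball 0 1 \<times> ball 0 1" f])
       (use f \<rho> in \<open>auto simp: holo2_def intro!: continuous_intros\<close>)
  moreover have "snd q - fst (fst q) \<noteq> 0"
    if "q \<in> (ball 0 \<rho> \<times> ball 0 1) \<times> sphere 0 \<rho>" for q :: "(complex \<times> complex) \<times> complex"
  proof -
    have "norm (fst (fst q)) < norm (snd q)"
      using that by (auto simp: mem_Times_iff)
    then show ?thesis
      by auto
  qed
  ultimately show ?thesis
    by (auto simp: case_prod_unfold intro!: continuous_intros)
qed

lemma holomorphic_on_partial1:
  assumes f: "holo2 f" and z: "z \<in> ball 0 1"
  shows "(\<lambda>w. deriv (\<lambda>u. f (u, w)) z) holomorphic_on ball 0 1"
proof -
  obtain \<rho> where \<rho>: "norm z < \<rho>" "\<rho> < 1"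
    using z dense by auto
  then have z_\<rho>: "z \<in> ball 0 \<rho>" and "0 < \<rho>"
    using norm_ge_zero[of z] by (auto simp del: norm_ge_zero)
  have "continuous_on (ball 0 1 \<times> sphere 0 \<rho>) (\<lambda>q. ((z, fst q), snd q))"
    by (intro continuous_intros)
  moreover have "(\<lambda>q. ((z, fst q), snd q)) ` (ball 0 1 \<times> sphere 0 \<rho>)
                   \<subseteq> (ball 0 \<rho> \<times> ball 0 1) \<times> sphere 0 \<rho>"
    using z_\<rho> by auto
  ultimately have "continuous_on (ball 0 1 \<times> sphere 0 \<rho>)
                     (\<lambda>q. (\<lambda>(p, u). f (u, snd p) / (u - fst p)\<^sup>2) ((z, fst q), snd q))"
    by (rule continuous_on_compose2[OF continuous_on_Cauchy_kernel[OF f \<rho>(2)]])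
  then have "continuous_on (ball 0 1 \<times> sphere 0 \<rho>) (\<lambda>(w, u). f (u, w) / (u - z)\<^sup>2)"
    by (simp add: case_prod_unfold)
  moreover have "(\<lambda>w. f (u, w) / (u - z)\<^sup>2) holomorphic_on ball 0 1" if "u \<in> sphere 0 \<rho>" for u
    using f that \<rho> by (auto simp: holo2_def intro!: holomorphic_intros)
  ultimately have "(\<lambda>w. contour_integral (circlepath 0 \<rho>) (\<lambda>u. f (u, w) / (u - z)\<^sup>2))
                     holomorphic_on ball 0 1"
    using \<open>0 < \<rho>\<close> by (intro holomorphic_on_contour_integral_param)
      (auto simp: continuous_on_vector_derivative_circlepath)
  then have "(\<lambda>w. 1 / (2 * of_real pi * \<i>) *
                  contour_integral (circlepath 0 \<rho>) (\<lambda>u. f (u, w) / (u - z)\<^sup>2))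
               holomorphic_on ball 0 1"
    by (intro holomorphic_intros)
  then show ?thesis
    by (rule holomorphic_transform) (simp add: partial1_eq_Cauchy_integral[OF f \<rho>(2) z_\<rho>])
qed

lemma continuous_on_partial1:
  assumes f: "holo2 f"
  shows "continuous_on (ball 0 1 \<times> ball 0 1) (\<lambda>(z, w). deriv (\<lambda>u. f (u, w)) z)"
proof -
  have "continuous_on (ball 0 \<rho> \<times> ball 0 1) (\<lambda>(z, w). deriv (\<lambda>u. f (u, w)) z)"
    if \<rho>: "0 < \<rho>" "\<rho> < 1" for \<rho>
  proof -
    have "continuous_on (ball 0 \<rho> \<times> ball 0 1)
            (\<lambda>p. contour_integral (circlepath 0 \<rho>) (\<lambda>u. f (u, snd p) / (u - fst p)\<^sup>2))"
      using continuous_on_Cauchy_kernel[OF f \<rho>(2)] \<rho>(1)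
      by (intro continuous_on_contour_integral_param)
        (auto simp: continuous_on_vector_derivative_circlepath)
    then have "continuous_on (ball 0 \<rho> \<times> ball 0 1) (\<lambda>p. 1 / (2 * of_real pi * \<i>) *
                 contour_integral (circlepath 0 \<rho>) (\<lambda>u. f (u, snd p) / (u - fst p)\<^sup>2))"
      by (intro continuous_intros)
    then show ?thesis
      by (rule continuous_on_eq) (auto simp: partial1_eq_Cauchy_integral[OF f \<rho>(2)])
  qed
  then have "continuous_on (\<Union>\<rho>\<in>{0<..<1}. ball 0 \<rho> \<times> ball 0 1) (\<lambda>(z, w). deriv (\<lambda>u. f (u, w)) z)"
    by (intro continuous_on_open_UN) (auto intro: open_Times)
  moreover have "(\<Union>\<rho>\<in>{0<..<1}. ball 0 \<rho> \<times> ball 0 1) = ball (0::complex) 1 \<times> ball (0::complex) 1"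
  proof (intro equalityI subsetI)
    fix p assume "p \<in> ball (0::complex) 1 \<times> ball (0::complex) 1"
    moreover obtain \<rho> where "norm (fst p) < \<rho>" "\<rho> < 1"
      using calculation dense by (auto simp: mem_Times_iff)
    ultimately show "p \<in> (\<Union>\<rho>\<in>{0<..<1}. ball 0 \<rho> \<times> ball 0 1)"
      using norm_ge_zero[of "fst p"] by (auto simp: mem_Times_iff simp del: norm_ge_zero)
  qed auto
  ultimately show ?thesis
    by simp
qed

lemma power2_partial1_le_circle_mean:
  fixes r :: real
  assumes f: "holo2 f" and z: "z \<in> ball 0 1" and r: "0 < r" "r < 1"
  shows "ennreal ((cmod (deriv (\<lambda>u. f (u, 0)) z))\<^sup>2) \<le> ennreal (1 / (2 * pi)) *
           (\<integral>\<^sup>+ \<theta>. indicator {0..2*pi} \<theta> *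
              ennreal ((cmod (deriv (\<lambda>u. f (u, r * cis \<theta>)) z))\<^sup>2) \<partial>lborel)"
proof -
  let ?h = "\<lambda>w. deriv (\<lambda>u. f (u, w)) z"
  have "?h holomorphic_on ball 0 1"
    using f z by (rule holomorphic_on_partial1)
  moreover have "cball 0 r \<subseteq> ball (0::complex) 1"
    using r by auto
  ultimately have "?h holomorphic_on cball 0 r"
    by (rule holomorphic_on_subset)
  then have "ennreal (2 * pi * (cmod (?h 0))\<^sup>2)
          \<le> (\<integral>\<^sup>+ \<theta>. indicator {0..2*pi} \<theta> * ennreal ((cmod (?h (r * cis \<theta>)))\<^sup>2) \<partial>lborel)"
    using power2_norm_le_circle_mean[OF _ r(1), of ?h 0] by simp
  then have "ennreal (1 / (2 * pi)) * ennreal (2 * pi * (cmod (?h 0))\<^sup>2)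
               \<le> ennreal (1 / (2 * pi)) *
                  (\<integral>\<^sup>+ \<theta>. indicator {0..2*pi} \<theta> * ennreal ((cmod (?h (r * cis \<theta>)))\<^sup>2) \<partial>lborel)"
    by (rule mult_left_mono) simp
  then show ?thesis
    by (simp add: ennreal_mult'[symmetric])
qed

lemma Poisson_measurable:
  assumes "Mplus_T \<mu>"
  shows "Poisson \<mu> \<in> borel_measurable borel"
proof -
  have sets: "sets \<mu> = sets (borel :: complex measure)" and "finite_measure \<mu>"
    using assms by (auto simp: Mplus_T_def)
  interpret finite_measure \<mu> by fact
  have "(\<lambda>p::complex \<times> complex. ennreal ((1 - (cmod (fst p))\<^sup>2) / (cmod (fst p - snd p))\<^sup>2))
          \<in> borel_measurable borel"
    by (intro measurable_compose[OF _ measurable_ennreal] borel_measurable_continuous_onI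
        borel_measurable_divide continuous_intros)
  moreover have "sets (borel \<Otimes>\<^sub>M \<mu>) = sets (borel :: (complex \<times> complex) measure)"
    using sets by (metis borel_prod sets_pair_measure_cong)
  ultimately have "(\<lambda>p. ennreal ((1 - (cmod (fst p))\<^sup>2) / (cmod (fst p - snd p))\<^sup>2))
                     \<in> borel_measurable (borel \<Otimes>\<^sub>M \<mu>)"
    by (simp cong: measurable_cong_sets)
  then show ?thesis
    unfolding Poisson_def[abs_def]
    by (intro borel_measurable_nn_integral) (simp add: case_prod_unfold)
qed

lemma partial1_on_circle_measurable:
  fixes r :: real
  assumes f: "holo2 f" and r: "0 < r" "r < 1"
  shows "(\<lambda>(\<theta>, z). indicator {0..2*pi} \<theta> * (indicator (ball 0 1) z *
            ennreal ((cmod (deriv (\<lambda>u. f (u, r * cis \<theta>)) z))\<^sup>2)))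
           \<in> borel_measurable (lborel \<Otimes>\<^sub>M lborel)"
proof -
  have "continuous_on (UNIV \<times> ball 0 1) (\<lambda>p. (snd p, complex_of_real r * cis (fst p)))"
    by (intro continuous_intros)
  moreover have "(\<lambda>p. (snd p, complex_of_real r * cis (fst p))) ` (UNIV \<times> ball 0 1)
                   \<subseteq> ball 0 1 \<times> ball 0 1"
    using r by (auto simp: norm_mult)
  ultimately have "continuous_on (UNIV \<times> ball 0 1)
      (\<lambda>p. (\<lambda>(z, w). deriv (\<lambda>u. f (u, w)) z) (snd p, complex_of_real r * cis (fst p)))"
    by (rule continuous_on_compose2[OF continuous_on_partial1[OF f]])
  then have "continuous_on (UNIV \<times> ball 0 1)
      (\<lambda>p::real \<times> complex. (cmod (deriv (\<lambda>u. f (u, complex_of_real r * cis (fst p))) (snd p)))\<^sup>2)"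
    by (simp add: continuous_intros)
  then have "continuous_on ({0..2*pi} \<times> ball 0 1)
      (\<lambda>p::real \<times> complex. (cmod (deriv (\<lambda>u. f (u, complex_of_real r * cis (fst p))) (snd p)))\<^sup>2)"
    by (rule continuous_on_subset) auto
  \<comment> \<open>\<open>\<partial>\<^sub>1f\<close> is only known to be continuous on the bidisc, hence the cut-off.\<close>
  then have "(\<lambda>p. indicator ({0..2*pi} \<times> ball 0 1) p *\<^sub>R
                 (cmod (deriv (\<lambda>u. f (u, complex_of_real r * cis (fst p))) (snd p)))\<^sup>2)
          \<in> borel_measurable borel"
    by (intro borel_measurable_continuous_on_indicator)
      (auto simp flip: borel_prod intro!: pair_measureI)
  then have "(\<lambda>p. ennreal (indicator ({0..2*pi} \<times> ball 0 1) p *\<^sub>R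
                 (cmod (deriv (\<lambda>u. f (u, complex_of_real r * cis (fst p))) (snd p)))\<^sup>2))
          \<in> borel_measurable borel"
    by measurable
  then have "(\<lambda>(\<theta>, z). indicator {0..2*pi} \<theta> * (indicator (ball 0 1) z *
               ennreal ((cmod (deriv (\<lambda>u. f (u, r * cis \<theta>)) z))\<^sup>2))) \<in> borel_measurable borel"
    by (rule measurable_cong[THEN iffD1, rotated]) (auto simp: indicator_def)
  then show ?thesis
    by (simp add: lborel_prod)
qed

lemma Dint1_restr1:
  "Dint1 \<mu> (restr1 f) r = ennreal (1 / pi) *
     (\<integral>\<^sup>+ z. indicator (ball 0 1) z * ennreal ((cmod (deriv (\<lambda>u. f (u, 0)) z))\<^sup>2) *
        Poisson \<mu> z \<partial>lborel)"
  (is "_ = ?X")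
proof -
  have "Dint1 \<mu> (restr1 f) r = ennreal (1 / (2 * pi)) * (\<integral>\<^sup>+ \<theta>. ?X * indicator {0..2*pi} \<theta> \<partial>lborel)"
    by (simp add: Dint1_def restr1_def mult.commute)
  also have "\<dots> = (ennreal (1 / (2 * pi)) * ennreal (2 * pi)) * ?X"
    by (subst nn_integral_cmult_indicator) (auto simp: ac_simps)
  also have "ennreal (1 / (2 * pi)) * ennreal (2 * pi) = 1"
    by (simp add: ennreal_mult'[symmetric])
  finally show ?thesis
    by simp
qed

lemma Dint1_eq_circle_means:
  fixes r :: real
  assumes f: "holo2 f" and \<mu>: "Mplus_T \<mu>" and r: "0 < r" "r < 1"
  shows "Dint1 \<mu> f r = ennreal (1 / pi) * (\<integral>\<^sup>+ z. ennreal (1 / (2 * pi)) *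
      (\<integral>\<^sup>+ \<theta>. indicator {0..2*pi} \<theta> * (indicator (ball 0 1) z *
          ennreal ((cmod (deriv (\<lambda>u. f (u, r * cis \<theta>)) z))\<^sup>2)) \<partial>lborel) * Poisson \<mu> z \<partial>lborel)"
proof -
  define c1 where "c1 = ennreal (1 / (2 * pi))"
  define c2 where "c2 = ennreal (1 / pi)"
  define E where "E \<theta> z = indicator {0..2*pi} \<theta> * (indicator (ball 0 1) z *
      ennreal ((cmod (deriv (\<lambda>u. f (u, complex_of_real r * cis \<theta>)) z))\<^sup>2))" for \<theta> z
  have [measurable]: "Poisson \<mu> \<in> borel_measurable lborel"
    using Poisson_measurable[OF \<mu>] by simp
  have E_m[measurable]: "(\<lambda>p. E (fst p) (snd p)) \<in> borel_measurable (lborel \<Otimes>\<^sub>M lborel)"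
    using partial1_on_circle_measurable[OF f r] by (simp add: E_def case_prod_unfold)
  have [measurable]: "(\<lambda>p. E (snd p) (fst p)) \<in> borel_measurable (lborel \<Otimes>\<^sub>M lborel)"
    using measurable_comp[OF measurable_pair_swap' E_m] by (simp add: o_def case_prod_unfold)
  have "Dint1 \<mu> f r = c1 * (\<integral>\<^sup>+ \<theta>. c2 * (\<integral>\<^sup>+ z. E \<theta> z * Poisson \<mu> z \<partial>lborel) \<partial>lborel)"
  proof -
    have "indicator {0..2*pi} \<theta> * (c2 * (\<integral>\<^sup>+ z. indicator (ball 0 1) z *
              ennreal ((cmod (deriv (\<lambda>u. f (u, complex_of_real r * cis \<theta>)) z))\<^sup>2) *
              Poisson \<mu> z \<partial>lborel))
          = c2 * (\<integral>\<^sup>+ z. E \<theta> z * Poisson \<mu> z \<partial>lborel)" for \<theta>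
      by (cases "\<theta> \<in> {0..2*pi}") (auto simp: E_def)
    then show ?thesis
      by (simp add: Dint1_def c1_def c2_def)
  qed
  also have "\<dots> = c1 * (c2 * (\<integral>\<^sup>+ \<theta>. (\<integral>\<^sup>+ z. E \<theta> z * Poisson \<mu> z \<partial>lborel) \<partial>lborel))"
    by (subst nn_integral_cmult) measurable
  also have "(\<integral>\<^sup>+ \<theta>. (\<integral>\<^sup>+ z. E \<theta> z * Poisson \<mu> z \<partial>lborel) \<partial>lborel)
      = (\<integral>\<^sup>+ z. (\<integral>\<^sup>+ \<theta>. E \<theta> z * Poisson \<mu> z \<partial>lborel) \<partial>lborel)"
    by (rule lborel_pair.Fubini'[symmetric]) (simp add: case_prod_unfold)
  also have "\<dots> = (\<integral>\<^sup>+ z. (\<integral>\<^sup>+ \<theta>. E \<theta> z \<partial>lborel) * Poisson \<mu> z \<partial>lborel)"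
    by (intro nn_integral_cong nn_integral_multc) (use measurable_Pair1[OF E_m] in simp)
  also have "c1 * (c2 * \<dots>) = c2 * (\<integral>\<^sup>+ z. c1 * (\<integral>\<^sup>+ \<theta>. E \<theta> z \<partial>lborel) * Poisson \<mu> z \<partial>lborel)"
  proof -
    have "(\<lambda>z. (\<integral>\<^sup>+ \<theta>. E \<theta> z \<partial>lborel) * Poisson \<mu> z) \<in> borel_measurable lborel"
      by measurable
    then show ?thesis
      by (simp add: nn_integral_cmult mult.assoc mult.left_commute)
  qed
  finally show ?thesis
    by (simp add: c1_def c2_def E_def)
qed

lemma Dint1_restr1_le:
  assumes f: "holo2 f" and \<mu>: "Mplus_T \<mu>" and r: "0 < r" "r < 1"
  shows "Dint1 \<mu> (restr1 f) r' \<le> Dint1 \<mu> f r"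
  unfolding Dint1_restr1 Dint1_eq_circle_means[OF f \<mu> r]
proof (intro mult_left_mono nn_integral_mono)
  fix z :: complex
  show "indicator (ball 0 1) z * ennreal ((cmod (deriv (\<lambda>u. f (u, 0)) z))\<^sup>2) * Poisson \<mu> z
    \<le> ennreal (1 / (2 * pi)) * (\<integral>\<^sup>+ \<theta>. indicator {0..2*pi} \<theta> * (indicator (ball 0 1) z *
          ennreal ((cmod (deriv (\<lambda>u. f (u, r * cis \<theta>)) z))\<^sup>2)) \<partial>lborel) * Poisson \<mu> z"
    using power2_partial1_le_circle_mean[OF f _ r, of z]
    by (cases "z \<in> ball 0 1") (auto intro: mult_right_mono)
qed simp

lemma Dint2_restr2_le:
  assumes f: "holo2 f" and \<mu>: "Mplus_T \<mu>" and r: "0 < r" "r < 1"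
  shows "Dint2 \<mu> (restr2 f) r' \<le> Dint2 \<mu> f r"
proof -
  have "Dint2 \<mu> (restr2 f) r' = Dint1 \<mu> (restr1 (f \<circ> prod.swap)) r'"
    by (simp add: Dint2_eq_Dint1_swap restr2_eq_swap o_def)
  also have "\<dots> \<le> Dint1 \<mu> (f \<circ> prod.swap) r"
    using holo2_comp_swap[OF f] \<mu> r by (rule Dint1_restr1_le)
  finally show ?thesis
    by (simp add: Dint2_eq_Dint1_swap)
qed

lemma Dmu_restr1_le:
  assumes "holo2 f" and "Mplus_T \<mu>1"
  shows "Dmu \<mu>1 \<mu>2 (restr1 f) \<le> Dmu \<mu>1 \<mu>2 f"
proof -
  have "Dmu \<mu>1 \<mu>2 (restr1 f) = (SUP r\<in>{0<..<1}. Dint1 \<mu>1 (restr1 f) r)"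
    by (simp add: Dmu_def Dint2_restr1)
  also have "\<dots> \<le> (SUP r\<in>{0<..<1}. Dint1 \<mu>1 f r)"
    by (rule SUP_mono) (use Dint1_restr1_le[OF assms] in auto)
  also have "\<dots> \<le> Dmu \<mu>1 \<mu>2 f"
    by (simp add: Dmu_def)
  finally show ?thesis .
qed

lemma Dmu_restr2_le:
  assumes "holo2 f" and "Mplus_T \<mu>2"
  shows "Dmu \<mu>1 \<mu>2 (restr2 f) \<le> Dmu \<mu>1 \<mu>2 f"
proof -
  have "Dmu \<mu>1 \<mu>2 (restr2 f) = (SUP r\<in>{0<..<1}. Dint2 \<mu>2 (restr2 f) r)"
    by (simp add: Dmu_def Dint1_restr2)
  also have "\<dots> \<le> (SUP r\<in>{0<..<1}. Dint2 \<mu>2 f r)"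
    by (rule SUP_mono) (use Dint2_restr2_le[OF assms] in auto)
  also have "\<dots> \<le> Dmu \<mu>1 \<mu>2 f"
    by (simp add: Dmu_def)
  finally show ?thesis .
qed

lemma Dspace_holo2: "f \<in> Dspace \<mu>1 \<mu>2 \<Longrightarrow> holo2 f"
  by (auto simp: Dspace_def inH2_def split: if_splits)

lemma Dspace_dominated:
  assumes "f \<in> Dspace \<mu>1 \<mu>2" and "holo2 g"
      and "H2norm2 g \<le> H2norm2 f" and "Dmu \<mu>1 \<mu>2 g \<le> Dmu \<mu>1 \<mu>2 f"
  shows "g \<in> Dspace \<mu>1 \<mu>2" and "Dnorm2 \<mu>1 \<mu>2 g \<le> Dnorm2 \<mu>1 \<mu>2 f"
  using assms by (auto simp: Dspace_def inH2_def Dnorm2_def intro: le_less_trans add_mono)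

theorem lemma5p4:
  fixes \<mu>1 \<mu>2 :: "complex measure"
  assumes "Mplus_T \<mu>1" and "Mplus_T \<mu>2"
  shows "(\<forall>f\<in>Dspace \<mu>1 \<mu>2.
           restr1 f \<in> Dspace \<mu>1 \<mu>2 \<and> restr2 f \<in> Dspace \<mu>1 \<mu>2 \<and>
           Dnorm2 \<mu>1 \<mu>2 (restr1 f) \<le> Dnorm2 \<mu>1 \<mu>2 f \<and>
           Dnorm2 \<mu>1 \<mu>2 (restr2 f) \<le> Dnorm2 \<mu>1 \<mu>2 f)
       \<and> (\<forall>f\<in>Dspace \<mu>1 \<mu>2. \<forall>g\<in>Dspace \<mu>1 \<mu>2. \<forall>c::complex.
           restr1 (\<lambda>z. c * f z + g z) = (\<lambda>z. c * restr1 f z + restr1 g z) \<and>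
           restr2 (\<lambda>z. c * f z + g z) = (\<lambda>z. c * restr2 f z + restr2 g z) \<and>
           restr1 (\<lambda>z. f z * g z) = (\<lambda>z. restr1 f z * restr1 g z) \<and>
           restr2 (\<lambda>z. f z * g z) = (\<lambda>z. restr2 f z * restr2 g z))"
proof -
  have "restr1 f \<in> Dspace \<mu>1 \<mu>2 \<and> restr2 f \<in> Dspace \<mu>1 \<mu>2 \<and>
        Dnorm2 \<mu>1 \<mu>2 (restr1 f) \<le> Dnorm2 \<mu>1 \<mu>2 f \<and> Dnorm2 \<mu>1 \<mu>2 (restr2 f) \<le> Dnorm2 \<mu>1 \<mu>2 f"
    if fD: "f \<in> Dspace \<mu>1 \<mu>2" for f
  proof -
    have f: "holo2 f"
      using fD by (rule Dspace_holo2)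
    show ?thesis
      using
        Dspace_dominated[OF fD holo2_restr1[OF f] H2norm2_restr1_le Dmu_restr1_le[OF f assms(1)]]
        Dspace_dominated[OF fD holo2_restr2[OF f] H2norm2_restr2_le Dmu_restr2_le[OF f assms(2)]]
      by blast
  qed
  moreover have "restr1 (\<lambda>z. c * f z + g z) = (\<lambda>z. c * restr1 f z + restr1 g z) \<and>
      restr2 (\<lambda>z. c * f z + g z) = (\<lambda>z. c * restr2 f z + restr2 g z) \<and>
      restr1 (\<lambda>z. f z * g z) = (\<lambda>z. restr1 f z * restr1 g z) \<and>
      restr2 (\<lambda>z. f z * g z) = (\<lambda>z. restr2 f z * restr2 g z)" for f g and c :: complex
    by (simp add: restr1_def restr2_def case_prod_unfold)
  ultimately show ?thesis
    by blast
qed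

end
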